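(* For every positive integer $n$, $$\Psi_n(0)=\begin{cases}0&\text{if } n=2;\\ p&\text{if } n=2p^\alpha \text{ for some prime } p \text{ and some positive integer } \alpha;\\ 1&\text{otherwise}.\end{cases}$$
   Context: The Fibonacci polynomials are defined by $F_1(x)=1$, $F_2(x)=x$, and $F_n(x)=xF_{n-1}(x)+F_{n-2}(x)$ for $n\geq 3$. For $n\geq 2$, the $n$-th fibotomic polynomial $\Psi_n(x)\in\mathbb{Z}[x]$ is the product of the monic irreducible factors of $F_n(x)$ which are not factors of $F_k(x)$ for any $k<n$; also $\Psi_1(x)=1$. Thus $F_n(x)=\prod_{d\mid n}\Psi_d(x)$ for all $n\geq1$. *)

theory Defs
  imports "HOL-Computational_Algebra.Polynomial" "HOL-Computational_Algebra.Primes"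
begin

fun fibpoly :: "nat \<Rightarrow> int poly" where
  "fibpoly 0 = 0"
| "fibpoly (Suc 0) = 1"
| "fibpoly (Suc (Suc n)) = [:0, 1:] * fibpoly (Suc n) + fibpoly n"

definition fibotomic :: "nat \<Rightarrow> int poly" where
  "fibotomic n = (\<Prod>p \<in> {p. lead_coeff p = 1 \<and> irreducible p \<and> p dvd fibpoly n \<and>
                              (\<forall>k. 1 \<le> k \<and> k < n \<longrightarrow> \<not> p dvd fibpoly k)}. p)"

end

theory Submission
  imports
    Defs
    "HOL-Computational_Algebra.Polynomial_Factorial"
    "HOL-Computational_Algebra.Squarefree"
    "HOL-Number_Theory.Prime_Powers"
begin

(* Cassini's identity makes consecutive F_n coprime, and together with the addition formula
   F_(m+n+1) = F_(m+1) F_(n+1) + F_m F_n it shows that a prime q divides F_n exactly when r | n,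
   r being the least index with q | F_r. An identity for the derivative of F_n shows that F_n is
   squarefree, so F_n = prod_(d | n) Psi_d. At x = 0 one has F_n(0) = [n odd], the coefficient of x
   in F_(2m) is m, and Psi_2 = x. Every other monic prime factor of F_n has a positive constant term,
   since F_n has no positive real roots. Hence Psi_d(0) = 1 for odd d and
   prod_(e | m, e > 1) Psi_(2e)(0) = m; after taking logarithms, e \<mapsto> ln Psi_(2e)(0) has the same
   divisor sums as the von Mangoldt function, so Psi_(2m)(0) = exp (Lambda m). *)

(* Kept opaque, so that ring normalisation does not turn products with it into pCons terms. *)
definition X_poly :: "int poly" where "X_poly = [:0, 1:]"

lemma fibpoly_Suc_Suc: "fibpoly (Suc (Suc n)) = X_poly * fibpoly (Suc n) + fibpoly n"
  by (simp add: X_poly_def)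

declare fibpoly.simps(3) [simp del]

lemma lead_coeff_degree_fibpoly:
  "n > 0 \<Longrightarrow> lead_coeff (fibpoly n) = 1 \<and> degree (fibpoly n) = n - 1"
proof (induction n rule: fibpoly.induct)
  case (3 n)
  have lc: "lead_coeff (fibpoly (Suc n)) = 1" and deg: "degree (fibpoly (Suc n)) = n"
    using "3.IH"(1) by auto
  then have "fibpoly (Suc n) \<noteq> 0"
    by auto
  then have deg_X: "degree (X_poly * fibpoly (Suc n)) = Suc n"
    and lc_X: "lead_coeff (X_poly * fibpoly (Suc n)) = 1"
    using lc deg by (simp_all add: X_poly_def)
  have "degree (fibpoly n) < Suc n"
    using "3.IH"(2) by (cases n) auto
  then show ?case
    using deg_X lc_X by (simp add: fibpoly_Suc_Suc degree_add_eq_left coeff_eq_0)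
qed auto

lemma lead_coeff_fibpoly: "n > 0 \<Longrightarrow> lead_coeff (fibpoly n) = 1"
  using lead_coeff_degree_fibpoly by blast

lemma fibpoly_nonzero: "n > 0 \<Longrightarrow> fibpoly n \<noteq> 0"
  using lead_coeff_fibpoly[of n] by auto

lemma fibpoly_cassini:
  "fibpoly (Suc n)^2 - X_poly * fibpoly (Suc n) * fibpoly n - fibpoly n^2 = (-1)^n"
proof (induction n)
  case (Suc n)
  have "fibpoly (Suc (Suc n))^2 - X_poly * fibpoly (Suc (Suc n)) * fibpoly (Suc n) - fibpoly (Suc n)^2
     = - (fibpoly (Suc n)^2 - X_poly * fibpoly (Suc n) * fibpoly n - fibpoly n^2)"
    unfolding fibpoly_Suc_Suc by (simp add: power2_eq_square algebra_simps)
  with Suc show ?case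
    by simp
qed simp

lemma coprime_fibpoly_Suc: "coprime (fibpoly n) (fibpoly (Suc n))"
proof (rule coprimeI)
  fix c assume "c dvd fibpoly n" "c dvd fibpoly (Suc n)"
  then have "c dvd (-1)^n"
    unfolding fibpoly_cassini[symmetric] by (simp add: power2_eq_square)
  then show "is_unit c"
    by (simp add: is_unit_power_iff dvd_unit_imp_unit)
qed

lemma fibpoly_add:
  "fibpoly (Suc (m + n)) = fibpoly (Suc m) * fibpoly (Suc n) + fibpoly m * fibpoly n"
proof (induction m rule: fibpoly.induct)
  case (3 m)
  have "fibpoly (Suc (Suc (Suc m) + n)) = X_poly * fibpoly (Suc (Suc m + n)) + fibpoly (Suc (m + n))"
    using fibpoly_Suc_Suc[of "Suc (m + n)"] by simp
  also have "\<dots> = (X_poly * fibpoly (Suc (Suc m)) + fibpoly (Suc m)) * fibpoly (Suc n)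
      + (X_poly * fibpoly (Suc m) + fibpoly m) * fibpoly n"
    using 3 by (simp add: algebra_simps)
  finally show ?case
    by (simp only: fibpoly_Suc_Suc)
qed (simp_all add: fibpoly_Suc_Suc)

lemma prime_dvd_fibpoly_add_iff:
  assumes "prime q" "q dvd fibpoly r"
  shows "q dvd fibpoly (m + r) \<longleftrightarrow> q dvd fibpoly m"
proof (cases r)
  case (Suc s)
  have "\<not> q dvd fibpoly s"
    using assms Suc coprime_fibpoly_Suc[of s] coprime_common_divisor not_prime_unit by blast
  then have "q dvd fibpoly m * fibpoly s \<longleftrightarrow> q dvd fibpoly m"
    using assms(1) by (simp add: prime_dvd_mult_iff)
  moreover have "fibpoly (m + r) = fibpoly (Suc m) * fibpoly r + fibpoly m * fibpoly s"
    using Suc fibpoly_add[of m s] by simp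
  ultimately show ?thesis
    using assms(2) by (simp add: dvd_add_right_iff)
qed simp

lemma prime_dvd_fibpoly_iff_dvd:
  assumes "prime q" "q dvd fibpoly r" "r > 0"
    and minimal: "\<forall>k. 0 < k \<and> k < r \<longrightarrow> \<not> q dvd fibpoly k"
  shows "q dvd fibpoly n \<longleftrightarrow> r dvd n"
proof -
  have shift: "q dvd fibpoly (m + k * r) \<longleftrightarrow> q dvd fibpoly m" for m k
  proof (induction k)
    case (Suc k)
    then show ?case
      using prime_dvd_fibpoly_add_iff[OF assms(1,2), of "m + k * r"] by (simp add: add_ac)
  qed simp
  have "q dvd fibpoly n \<longleftrightarrow> q dvd fibpoly (n mod r)"
    using shift[of "n mod r" "n div r"] by simp
  also have "\<dots> \<longleftrightarrow> n mod r = 0"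
    using minimal assms(3) by (cases "n mod r = 0") auto
  finally show ?thesis
    by (simp add: dvd_eq_mod_eq_0)
qed

lemma pderiv_fibpoly:
  "(X_poly^2 + 4) * pderiv (fibpoly n)
     = of_nat n * (2 * fibpoly (Suc n) - X_poly * fibpoly n) - X_poly * fibpoly n"
proof (induction n rule: fibpoly.induct)
  case (3 n)
  have "pderiv X_poly = 1"
    by (simp add: X_poly_def pderiv_pCons)
  then have "(X_poly^2 + 4) * pderiv (fibpoly (Suc (Suc n)))
      = (X_poly^2 + 4) * fibpoly (Suc n) + X_poly * ((X_poly^2 + 4) * pderiv (fibpoly (Suc n)))
        + (X_poly^2 + 4) * pderiv (fibpoly n)"
    by (simp add: fibpoly_Suc_Suc pderiv_add pderiv_mult algebra_simps)
  also have "\<dots> = of_nat (Suc (Suc n)) * (2 * fibpoly (Suc (Suc (Suc n))) - X_poly * fibpoly (Suc (Suc n)))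
      - X_poly * fibpoly (Suc (Suc n))"
    unfolding "3.IH" by (simp add: fibpoly_Suc_Suc power2_eq_square algebra_simps)
  finally show ?case .
qed (simp_all add: fibpoly_Suc_Suc X_poly_def)

lemma const_dvd_monic_imp_unit:
  fixes p q :: "'a :: idom_divide poly"
  assumes "q dvd p" "lead_coeff p = 1" "degree q = 0"
  shows "is_unit q"
proof -
  obtain c where q: "q = [:c:]"
    using assms(3) by (metis degree_0_id)
  then have "c dvd lead_coeff p"
    using assms(1) const_poly_dvd_iff by blast
  then show ?thesis
    using q assms(2) by (simp add: is_unit_poly_iff)
qed

lemma squarefree_fibpoly:
  assumes "n > 0"
  shows "squarefree (fibpoly n)"
proof -
  have "\<not> q^2 dvd fibpoly n" if q: "prime q" for q
  proof
    assume "q^2 dvd fibpoly n"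
    then obtain r where r: "fibpoly n = q * (q * r)"
      by (metis power2_eq_square mult.assoc dvdE)
    have dvd_F: "q dvd fibpoly n"
      using r by simp
    have "q dvd pderiv (fibpoly n)"
      unfolding r by (simp add: pderiv_mult)
    then have "q dvd of_nat n * (2 * fibpoly (Suc n) - X_poly * fibpoly n) - X_poly * fibpoly n"
      unfolding pderiv_fibpoly[symmetric] by (rule dvd_mult)
    moreover have "of_nat (2 * n) * fibpoly (Suc n)
        = (of_nat n * (2 * fibpoly (Suc n) - X_poly * fibpoly n) - X_poly * fibpoly n)
          + (of_nat n + 1) * X_poly * fibpoly n"
      by (simp add: algebra_simps)
    ultimately have "q dvd of_nat (2 * n) * fibpoly (Suc n)"
      using dvd_F by simp
    moreover have "\<not> q dvd fibpoly (Suc n)"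
      using q dvd_F coprime_fibpoly_Suc coprime_common_divisor not_prime_unit by blast
    ultimately have "q dvd of_nat (2 * n)"
      using q by (simp add: prime_dvd_mult_iff)
    then have "degree q = 0"
      using assms dvd_imp_degree_le[of q "of_nat (2 * n)"] by (simp add: of_nat_poly)
    then show False
      using const_dvd_monic_imp_unit[OF dvd_F] lead_coeff_fibpoly[OF assms] q not_prime_unit by blast
  qed
  then show ?thesis
    using fibpoly_nonzero[OF assms] by (simp add: squarefree_factorial_semiring)
qed

instance poly :: ("{factorial_ring_gcd, semiring_gcd_mult_normalize}") factorial_semiring_multiplicative ..

lemma prod_prime_factors_squarefree:
  fixes x :: "'a :: factorial_semiring_multiplicative"
  assumes "squarefree x"
  shows "\<Prod>(prime_factors x) = normalize x"
proof -
  have "x \<noteq> 0"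
    using assms by auto
  then have "\<Prod>(prime_factors x) = (\<Prod>p\<in>prime_factors x. p ^ multiplicity p x)"
    using assms by (intro prod.cong) (simp_all add: squarefree_factorial_semiring')
  also have "\<dots> = normalize x"
    using \<open>x \<noteq> 0\<close> by (rule prod_prime_factors)
  finally show ?thesis .
qed

lemma normalize_monic:
  fixes p :: "'a :: {semidom_divide_unit_factor, idom_divide} poly"
  shows "lead_coeff p = 1 \<Longrightarrow> normalize p = p"
  by (simp add: poly_eq_iff is_unit_unit_factor)

lemma prime_dvd_monic_iff:
  fixes p q :: "int poly"
  assumes "q dvd p" "lead_coeff p = 1"
  shows "prime q \<longleftrightarrow> lead_coeff q = 1 \<and> irreducible q"
proof -
  have "lead_coeff q dvd 1"
    using assms by (metis dvdE dvdI lead_coeff_mult)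
  then have "lead_coeff q = 1 \<or> lead_coeff q = -1"
    by auto
  moreover have "normalize q \<noteq> q" if "lead_coeff q = -1"
  proof
    assume "normalize q = q"
    moreover have "coeff (normalize q) (degree q) = 1"
      using that by (simp add: unit_factor_int_def)
    ultimately show False
      using that by simp
  qed
  ultimately show ?thesis
    by (auto simp: prime_def prime_elem_iff_irreducible normalize_monic)
qed

lemma fibpoly_eq_prod_prime_factors: "n > 0 \<Longrightarrow> fibpoly n = \<Prod>(prime_factors (fibpoly n))"
  using prod_prime_factors_squarefree[OF squarefree_fibpoly] normalize_monic[OF lead_coeff_fibpoly]
  by simp

definition primitive_factors :: "nat \<Rightarrow> int poly set" where
  "primitive_factors n =
     {q. prime q \<and> q dvd fibpoly n \<and> (\<forall>k. 0 < k \<and> k < n \<longrightarrow> \<not> q dvd fibpoly k)}"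

lemma fibotomic_eq_prod_primitive_factors:
  assumes "n > 0"
  shows "fibotomic n = \<Prod>(primitive_factors n)"
proof -
  have "prime q \<longleftrightarrow> lead_coeff q = 1 \<and> irreducible q" if "q dvd fibpoly n" for q
    using prime_dvd_monic_iff[OF that lead_coeff_fibpoly[OF assms]] .
  moreover have "(0 < k) = (1 \<le> k)" for k :: nat
    by linarith
  ultimately show ?thesis
    unfolding fibotomic_def primitive_factors_def by (intro arg_cong[where f = "\<lambda>A. \<Prod>A"] Collect_cong) metis
qed

lemma primitive_factor_dvd_fibpoly_iff:
  "d > 0 \<Longrightarrow> q \<in> primitive_factors d \<Longrightarrow> q dvd fibpoly n \<longleftrightarrow> d dvd n"
  unfolding primitive_factors_def using prime_dvd_fibpoly_iff_dvd by blast

lemma primitive_factors_disjoint: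
  assumes "d > 0" "e > 0" "d \<noteq> e"
  shows "primitive_factors d \<inter> primitive_factors e = {}"
proof -
  have "\<not> (q \<in> primitive_factors d \<and> q \<in> primitive_factors e)" if "d < e" "d > 0" for d e q
    using that by (auto simp: primitive_factors_def)
  then show ?thesis
    using assms by (metis disjoint_iff linorder_neqE_nat)
qed

lemma prime_factors_fibpoly:
  assumes "n > 0"
  shows "prime_factors (fibpoly n) = (\<Union>d \<in> {d. d dvd n}. primitive_factors d)"
proof (intro equalityI subsetI)
  fix q assume "q \<in> prime_factors (fibpoly n)"
  then have q: "prime q" "q dvd fibpoly n"
    by (simp_all add: in_prime_factors_iff)
  define r where "r = (LEAST k. 0 < k \<and> q dvd fibpoly k)"
  have r: "0 < r \<and> q dvd fibpoly r"
    unfolding r_def by (rule LeastI[of _ n]) (use q assms in simp)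
  moreover have "\<forall>k. 0 < k \<and> k < r \<longrightarrow> \<not> q dvd fibpoly k"
    unfolding r_def using not_less_Least by blast
  ultimately have "q \<in> primitive_factors r"
    using q(1) unfolding primitive_factors_def by blast
  moreover from this have "r dvd n"
    using primitive_factor_dvd_fibpoly_iff r q(2) by blast
  ultimately show "q \<in> (\<Union>d \<in> {d. d dvd n}. primitive_factors d)"
    by blast
next
  fix q assume "q \<in> (\<Union>d \<in> {d. d dvd n}. primitive_factors d)"
  then obtain d where d: "d dvd n" "q \<in> primitive_factors d"
    by blast
  have "d > 0"
    using d(1) assms by (cases d) simp_all
  then have "q dvd fibpoly n"
    using d primitive_factor_dvd_fibpoly_iff by blast
  moreover have "prime q"
    using d(2) by (simp add: primitive_factors_def)
  ultimately show "q \<in> prime_factors (fibpoly n)"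
    using fibpoly_nonzero[OF assms] by (simp add: in_prime_factors_iff)
qed

theorem fibpoly_eq_prod_fibotomic:
  assumes "n > 0"
  shows "fibpoly n = (\<Prod>d | d dvd n. fibotomic d)"
proof -
  have divisors_pos: "d > 0" if "d \<in> {d. d dvd n}" for d
    using that assms by (auto intro: Nat.gr0I)
  have "fibpoly n = \<Prod>(\<Union>d \<in> {d. d dvd n}. primitive_factors d)"
    using fibpoly_eq_prod_prime_factors[OF assms] prime_factors_fibpoly[OF assms] by simp
  also have "\<dots> = (\<Prod>d | d dvd n. \<Prod>(primitive_factors d))"
  proof (rule prod.UNION_disjoint)
    show "finite {d. d dvd n}"
      using assms by simp
    show "\<forall>d \<in> {d. d dvd n}. finite (primitive_factors d)"
      using prime_factors_fibpoly[OF assms] by (metis UN_subset_iff finite_set_mset finite_subset order_refl)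
    show "\<forall>d \<in> {d. d dvd n}. \<forall>e \<in> {d. d dvd n}. d \<noteq> e \<longrightarrow> primitive_factors d \<inter> primitive_factors e = {}"
      using divisors_pos primitive_factors_disjoint by blast
  qed
  finally show ?thesis
    using divisors_pos by (simp add: fibotomic_eq_prod_primitive_factors)
qed

lemma prime_X_poly: "prime X_poly"
proof -
  have "prime_elem X_poly"
    unfolding X_poly_def by (rule prime_elem_linear_poly) simp_all
  then show ?thesis
    by (simp add: prime_def X_poly_def normalize_monic)
qed

lemma primitive_factors_2: "primitive_factors 2 = {X_poly}"
proof (intro equalityI subsetI)
  fix q assume "q \<in> primitive_factors 2"
  then have "prime q" "q dvd X_poly"
    by (simp_all add: primitive_factors_def numeral_2_eq_2 fibpoly_Suc_Suc)
  then show "q \<in> {X_poly}"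
    using prime_X_poly primes_dvd_imp_eq by blast
next
  fix q assume "q \<in> {X_poly}"
  then show "q \<in> primitive_factors 2"
    using prime_X_poly not_prime_unit
    by (auto simp: primitive_factors_def numeral_2_eq_2 fibpoly_Suc_Suc less_Suc_eq)
qed

lemma fibotomic_2: "fibotomic 2 = X_poly"
  by (simp add: fibotomic_eq_prod_primitive_factors primitive_factors_2)

lemma coeff_0_1_fibpoly:
  "coeff (fibpoly n) 0 = of_bool (odd n) \<and> coeff (fibpoly n) 1 = (if even n then int (n div 2) else 0)"
proof (induction n rule: fibpoly.induct)
  case (3 n)
  have "fibpoly (Suc (Suc n)) = pCons 0 (fibpoly (Suc n)) + fibpoly n"
    by (simp add: fibpoly_Suc_Suc X_poly_def)
  with 3 show ?case
    by (auto simp: coeff_pCons)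
qed simp_all

lemma map_poly_of_int_add: "map_poly of_int (p + q) = map_poly of_int p + map_poly of_int q"
  by (rule poly_eqI) (simp add: coeff_map_poly)

lemma map_poly_of_int_mult: "map_poly of_int (p * q) = map_poly of_int p * map_poly of_int q"
  by (rule poly_eqI) (simp add: coeff_map_poly coeff_mult)

lemma poly_fibpoly_pos:
  fixes x :: real
  assumes "n > 0" "x > 0"
  shows "poly (map_poly of_int (fibpoly n)) x > 0"
  using assms(1)
proof (induction n rule: fibpoly.induct)
  case (3 n)
  have "poly (map_poly of_int (fibpoly n)) x \<ge> 0"
    using "3.IH"(2) by (cases n) (simp_all add: less_imp_le)
  moreover have "poly (map_poly of_int (fibpoly (Suc (Suc n)))) x
      = x * poly (map_poly of_int (fibpoly (Suc n))) x + poly (map_poly of_int (fibpoly n)) x"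
    by (simp add: fibpoly_Suc_Suc X_poly_def map_poly_of_int_add map_poly_of_int_mult map_poly_pCons)
  ultimately show ?case
    using "3.IH"(1) assms(2) by (simp add: add_pos_nonneg)
qed simp_all

lemma poly_0_nonneg_if_no_positive_roots:
  fixes p :: "real poly"
  assumes "lead_coeff p > 0" and no_roots: "\<forall>x>0. poly p x \<noteq> 0"
  shows "poly p 0 \<ge> 0"
proof (rule ccontr)
  assume "\<not> poly p 0 \<ge> 0"
  obtain b where b: "\<forall>x\<ge>b. poly p x \<ge> lead_coeff p"
    using poly_pinfty_gt_lc[OF assms(1)] by blast
  have "poly p (max b 1) > 0"
    using b assms(1) by (meson max.cobounded1 order_less_le_trans)
  moreover have "poly p 0 < 0" "0 < max b (1 :: real)"
    using \<open>\<not> poly p 0 \<ge> 0\<close> by simp_all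
  ultimately obtain x where "0 < x" "poly p x = 0"
    using poly_IVT_pos by blast
  with no_roots show False
    by blast
qed

lemma poly_prime_factor_fibpoly_0_nonneg:
  assumes "prime q" "q dvd fibpoly n" "n > 0"
  shows "poly q 0 \<ge> 0"
proof -
  have lc: "lead_coeff q = 1"
    using prime_dvd_monic_iff assms lead_coeff_fibpoly by blast
  obtain r where r: "fibpoly n = q * r"
    using assms(2) by (elim dvdE)
  have "poly (map_poly of_int q) x \<noteq> (0 :: real)" if "x > 0" for x
    using poly_fibpoly_pos[OF assms(3) that] by (auto simp: r map_poly_of_int_mult)
  moreover have "lead_coeff (map_poly real_of_int q) = 1"
    using lc by (simp add: lead_coeff_map_poly_nz)
  ultimately have "poly (map_poly real_of_int q) 0 \<ge> 0"
    by (intro poly_0_nonneg_if_no_positive_roots) simp_all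
  then show ?thesis
    by (simp add: poly_0_coeff_0 coeff_map_poly)
qed

lemma poly_fibotomic_0_pos:
  assumes "n > 0" "n \<noteq> 2"
  shows "poly (fibotomic n) 0 > 0"
proof -
  have "poly q 0 > 0" if q: "q \<in> primitive_factors n" for q
  proof -
    have "prime q" "q dvd fibpoly n"
      using q by (simp_all add: primitive_factors_def)
    then have "poly q 0 \<ge> 0"
      using assms(1) by (rule poly_prime_factor_fibpoly_0_nonneg)
    moreover have "poly q 0 \<noteq> 0"
    proof
      assume "poly q 0 = 0"
      then have "X_poly dvd q"
        using dvd_iff_poly_eq_0[of 0 q] by (simp add: X_poly_def)
      then have "q = X_poly"
        using prime_X_poly \<open>prime q\<close> primes_dvd_imp_eq by blast
      then have "q \<in> primitive_factors 2"
        by (simp add: primitive_factors_2)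
      moreover have "primitive_factors n \<inter> primitive_factors 2 = {}"
        using primitive_factors_disjoint assms by simp
      ultimately show False
        using q by blast
    qed
    ultimately show ?thesis
      by simp
  qed
  then show ?thesis
    using assms(1) by (simp add: fibotomic_eq_prod_primitive_factors poly_prod prod_pos)
qed

lemma prod_poly_fibotomic_0:
  "n > 0 \<Longrightarrow> (\<Prod>d | d dvd n. poly (fibotomic d) 0) = coeff (fibpoly n) 0"
  by (simp add: fibpoly_eq_prod_fibotomic poly_prod flip: poly_0_coeff_0)

lemma poly_fibotomic_odd_0:
  assumes "odd n"
  shows "poly (fibotomic n) 0 = 1"
proof -
  have "n > 0" "n \<noteq> 2"
    using assms by (auto intro: Nat.gr0I)
  have "poly (fibotomic n) 0 dvd (\<Prod>d | d dvd n. poly (fibotomic d) 0)"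
    using \<open>n > 0\<close> by (intro dvd_prodI) simp_all
  also have "\<dots> = 1"
    using \<open>n > 0\<close> assms coeff_0_1_fibpoly[of n] by (simp add: prod_poly_fibotomic_0)
  finally show ?thesis
    using poly_fibotomic_0_pos[OF \<open>n > 0\<close> \<open>n \<noteq> 2\<close>] by simp
qed

lemma prod_poly_fibotomic_even_0:
  assumes "m > 0"
  shows "(\<Prod>e | e dvd m \<and> e \<noteq> 1. poly (fibotomic (2 * e)) 0) = int m"
proof -
  define D where "D = {d. d dvd 2 * m} - {2}"
  have fin: "finite {d. d dvd 2 * m}" and two: "2 \<in> {d. d dvd 2 * m}"
    using assms by simp_all
  have "fibpoly (2 * m) = fibotomic 2 * (\<Prod>d\<in>D. fibotomic d)"
    unfolding D_def using assms fibpoly_eq_prod_fibotomic[of "2 * m"] prod.remove[OF fin two] by simp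
  then have "fibpoly (2 * m) = pCons 0 (\<Prod>d\<in>D. fibotomic d)"
    by (simp add: fibotomic_2 X_poly_def)
  then have "poly (\<Prod>d\<in>D. fibotomic d) 0 = int m"
    using coeff_0_1_fibpoly[of "2 * m"] by (simp add: poly_0_coeff_0)
  then have "(\<Prod>d\<in>D. poly (fibotomic d) 0) = int m"
    by (simp add: poly_prod)
  also have "(\<Prod>d\<in>D. poly (fibotomic d) 0) = (\<Prod>d\<in>(*) 2 ` {e. e dvd m \<and> e \<noteq> 1}. poly (fibotomic d) 0)"
  proof (rule prod.mono_neutral_right)
    show "finite D"
      using fin by (simp add: D_def)
    show "(*) 2 ` {e. e dvd m \<and> e \<noteq> 1} \<subseteq> D"
      by (auto simp: D_def)
    show "\<forall>d \<in> D - (*) 2 ` {e. e dvd m \<and> e \<noteq> 1}. poly (fibotomic d) 0 = 1"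
    proof
      fix d assume d: "d \<in> D - (*) 2 ` {e. e dvd m \<and> e \<noteq> 1}"
      have "odd d"
      proof
        assume "even d"
        then obtain e where "d = 2 * e"
          by blast
        with d show False
          by (auto simp: D_def)
      qed
      then show "poly (fibotomic d) 0 = 1"
        by (rule poly_fibotomic_odd_0)
    qed
  qed
  also have "\<dots> = (\<Prod>e | e dvd m \<and> e \<noteq> 1. poly (fibotomic (2 * e)) 0)"
    by (simp add: prod.reindex inj_on_def)
  finally show ?thesis .
qed

lemma eq_if_divisor_sums_eq:
  fixes f g :: "nat \<Rightarrow> 'a :: cancel_comm_monoid_add"
  assumes sums: "\<And>m. m > 0 \<Longrightarrow> (\<Sum>d | d dvd m. f d) = (\<Sum>d | d dvd m. g d)"
  shows "n > 0 \<Longrightarrow> f n = g n"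
proof (induction n rule: less_induct)
  case (less n)
  have fin: "finite {d. d dvd n}" and self: "n \<in> {d. d dvd n}"
    using less.prems by simp_all
  have "(\<Sum>d \<in> {d. d dvd n} - {n}. f d) = (\<Sum>d \<in> {d. d dvd n} - {n}. g d)"
    using less.prems by (intro sum.cong refl less.IH) (auto intro: Nat.gr0I dest: dvd_imp_le)
  moreover have "f n + (\<Sum>d \<in> {d. d dvd n} - {n}. f d) = g n + (\<Sum>d \<in> {d. d dvd n} - {n}. g d)"
    using sums[OF less.prems] sum.remove[OF fin self, of f] sum.remove[OF fin self, of g] by simp
  ultimately show ?case
    by simp
qed

lemma ln_poly_fibotomic_even_0:
  assumes "m \<ge> 2"
  shows "ln (poly (fibotomic (2 * m)) 0) = mangoldt m"
proof -
  \<comment> \<open>Psi_2(0) = 0, so e = 1 is excluded; the value 0 there matches mangoldt 1.\<close>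
  define f where "f e = (if e = 1 then 0 else ln (poly (fibotomic (2 * e)) 0))" for e
  have sums: "(\<Sum>d | d dvd m. f d) = (\<Sum>d | d dvd m. mangoldt d)" if "m > 0" for m
  proof -
    have nonzero: "real_of_int (poly (fibotomic (2 * e)) 0) \<noteq> 0" if "e \<in> {e. e dvd m \<and> e \<noteq> 1}" for e
      using that \<open>m > 0\<close> poly_fibotomic_0_pos[of "2 * e"] by (auto intro: Nat.gr0I)
    have "(\<Sum>d | d dvd m. f d) = (\<Sum>d | d dvd m \<and> d \<noteq> 1. ln (poly (fibotomic (2 * d)) 0))"
      using \<open>m > 0\<close> by (intro sum.mono_neutral_cong_right) (auto simp: f_def)
    also have "\<dots> = ln (\<Prod>d | d dvd m \<and> d \<noteq> 1. real_of_int (poly (fibotomic (2 * d)) 0))"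
      using \<open>m > 0\<close> nonzero by (intro ln_prod[symmetric]) simp_all
    also have "\<dots> = ln m"
      using prod_poly_fibotomic_even_0[OF \<open>m > 0\<close>] by (simp flip: of_int_prod)
    finally show ?thesis
      using mangoldt_sum[of m, where 'a = real] \<open>m > 0\<close> by simp
  qed
  have "f m = mangoldt m"
    by (rule eq_if_divisor_sums_eq[OF sums]) (use assms in simp_all)
  then show ?thesis
    using assms by (simp add: f_def)
qed

lemma poly_fibotomic_even_0:
  assumes "m \<ge> 2"
  shows "poly (fibotomic (2 * m)) 0 = (if primepow m then int (aprimedivisor m) else 1)"
proof -
  define c where "c = (if primepow m then int (aprimedivisor m) else 1)"
  have "c > 0"
    using assms by (simp add: c_def)
  moreover have "poly (fibotomic (2 * m)) 0 > 0"
    using assms by (intro poly_fibotomic_0_pos) simp_all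
  moreover have "ln (poly (fibotomic (2 * m)) 0) = ln c"
    using ln_poly_fibotomic_even_0[OF assms] by (simp add: mangoldt_def c_def)
  ultimately show ?thesis
    unfolding c_def[symmetric] by (metis ln_inj_iff of_int_0_less_iff of_int_eq_iff)
qed

theorem mainTheorem5:
  fixes n :: nat
  assumes "n > 0"
  shows "(n = 2 \<longrightarrow> poly (fibotomic n) 0 = 0) \<and>
         (\<forall>p \<alpha>. prime p \<and> \<alpha> > 0 \<and> n = 2 * p ^ \<alpha> \<longrightarrow> poly (fibotomic n) 0 = int p) \<and>
         (n \<noteq> 2 \<and> \<not> (\<exists>p \<alpha>. prime p \<and> \<alpha> > 0 \<and> n = 2 * p ^ \<alpha>)
            \<longrightarrow> poly (fibotomic n) 0 = 1)"
proof (intro conjI allI impI)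
  show "n = 2 \<Longrightarrow> poly (fibotomic n) 0 = 0"
    by (simp add: fibotomic_2 X_poly_def)
next
  fix p \<alpha> :: nat
  assume p: "prime p \<and> \<alpha> > 0 \<and> n = 2 * p ^ \<alpha>"
  then have "p ^ \<alpha> \<ge> 2"
    using prime_ge_2_nat[of p] self_le_power[of p \<alpha>] by simp
  then show "poly (fibotomic n) 0 = int p"
    using p by (simp add: poly_fibotomic_even_0 aprimedivisor_prime_power)
next
  assume n: "n \<noteq> 2 \<and> \<not> (\<exists>p \<alpha>. prime p \<and> \<alpha> > 0 \<and> n = 2 * p ^ \<alpha>)"
  show "poly (fibotomic n) 0 = 1"
  proof (cases "even n")
    case True
    then obtain m where m: "n = 2 * m"
      by blast
    have "m \<ge> 2"
      using n m assms by simp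
    moreover have "\<not> primepow m"
      using n m unfolding primepow_def by blast
    ultimately show ?thesis
      using m by (simp add: poly_fibotomic_even_0)
  qed (simp add: poly_fibotomic_odd_0)
qed

end
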